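(* Let $1\le k<n$ and let $T\colon\mathbb{H}_n\to\mathbb{H}_n$ be a bijective $\mathbb{R}$-linear map preserving parallel pairs with respect to $w_k$. Suppose $A\in\mathbb{H}_n$ attains its $k$-numerical radius at a unique rank-$k$ orthogonal projection $Q$. Then $X=T^{-1}(A)$ either attains its $k$-numerical radius at a unique rank-$k$ orthogonal projection $P$, or $n=2k$ and the rank-$k$ orthogonal projections at which $X$ attains its $k$-numerical radius are exactly $P$ and $I-P$ for some $P$.
   Context: $\mathbb{H}_n$ is the real space of $n\times n$ Hermitian matrices. $w_k(A)=\max\{|\operatorname{tr}(AP)|: P=P^*=P^2,\operatorname{tr}P=k\}$; $A$ attains its $k$-numerical radius at a rank-$k$ orthogonal projection $P$ if $|\operatorname{tr}(AP)|=w_k(A)$. For $A,B\in\mathbb{H}_n$, $A\parallel B$ means $w_k(A+\mu B)=w_k(A)+w_k(B)$ for some $\mu\in\{1,-1\}$; $T$ preserves parallel pairs if $T(A)\parallel T(B)$ whenever $A\parallel B$. *)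

theory Defs
  imports "HOL-Analysis.Analysis"
begin

definition cadj :: "complex^'n^'n \<Rightarrow> complex^'n^'n" where
  "cadj A = (\<chi> i j. cnj (A $ j $ i))"

text \<open>The set H_n of Hermitian matrices (index type 'n, n = CARD('n)).\<close>
definition herm :: "(complex^'n^'n) set" where
  "herm = {A. cadj A = A}"

definition rank_proj :: "nat \<Rightarrow> (complex^'n^'n) set" where
  "rank_proj k = {P. cadj P = P \<and> P ** P = P \<and> trace P = of_nat k}"

definition wk :: "nat \<Rightarrow> complex^'n^'n \<Rightarrow> real" where
  "wk k A = Sup {cmod (trace (A ** P)) | P. P \<in> rank_proj k}"

definition attain_set :: "nat \<Rightarrow> complex^'n^'n \<Rightarrow> (complex^'n^'n) set" where
  "attain_set k A = {P \<in> rank_proj k. cmod (trace (A ** P)) = wk k A}"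

definition wk_parallel :: "nat \<Rightarrow> complex^'n^'n \<Rightarrow> complex^'n^'n \<Rightarrow> bool" where
  "wk_parallel k A B \<longleftrightarrow> (\<exists>\<mu>::real\<in>{1, -1}. wk k (A + \<mu> *\<^sub>R B) = wk k A + wk k B)"

end

theory Submission
  imports Defs
begin

text \<open>
  Two Hermitian matrices are w_k-parallel exactly when some rank-k projection attains w_k at both.
  A projection P attaining w_k(Z) commutes with Z, since otherwise rotating a unit vector of ran P
  slightly towards ker P increases |tr(ZP)|; conversely, if Z commutes with P then P attains
  w_k(Z + cP) for every c \<ge> 2\<parallel>Z\<parallel>. Hence T maps the Hermitian commutant of every projection
  attaining w_k(X) into that of Q. These commutants are unitarily conjugate, hence of equal
  dimension, so injectivity of T makes the commutants of any two attaining projections P1, P2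
  equal; and a rank-k projection whose commutant contains that of P2 is P2 or, when n = 2k, I - P2.
\<close>

section \<open>Adjoints, traces and rank-one matrices\<close>

lemma cadj_cadj [simp]: "cadj (cadj A) = A"
  by (simp add: cadj_def vec_eq_iff)

lemma cadj_add [simp]: "cadj (A + B) = cadj A + cadj B"
  by (simp add: cadj_def vec_eq_iff)

lemma cadj_diff [simp]: "cadj (A - B) = cadj A - cadj B"
  by (simp add: cadj_def vec_eq_iff)

lemma cadj_scaleR [simp]: "cadj (c *\<^sub>R A) = c *\<^sub>R cadj A"
  by (simp add: cadj_def vec_eq_iff scaleR_conv_of_real scaleR_vec_def)

lemma cadj_zero [simp]: "cadj 0 = 0"
  by (simp add: cadj_def vec_eq_iff)

lemma cadj_one [simp]: "cadj (mat 1) = mat 1"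
  by (simp add: cadj_def vec_eq_iff mat_def)

lemma cadj_mult: "cadj (A ** B) = cadj B ** cadj A"
  by (simp add: cadj_def vec_eq_iff matrix_matrix_mult_def mult.commute)

lemma cadj_sum: "finite I \<Longrightarrow> cadj (\<Sum>i\<in>I. F i) = (\<Sum>i\<in>I. cadj (F i))"
  by (induction I rule: finite_induct) (auto simp: cadj_def vec_eq_iff)

lemma trace_cadj: "trace (cadj A) = cnj (trace A)"
  by (simp add: cadj_def trace_def)

lemma herm_iff: "A \<in> herm \<longleftrightarrow> cadj A = A"
  by (simp add: herm_def)

lemma subspace_herm: "subspace (herm :: (complex^'n^'n) set)"
  unfolding subspace_def herm_def by auto

lemma trace_scaleR: "trace (c *\<^sub>R A) = c *\<^sub>R trace A"
  by (simp add: trace_def scaleR_sum_right)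

lemma matrix_add_rdistrib: "(A + B) ** (C::'a::semiring_1^'n^'n) = A ** C + B ** C"
  by (simp add: matrix_matrix_mult_def vec_eq_iff sum.distrib distrib_right)

lemma matrix_diff_rdistrib: "(A - B) ** (C::'a::ring_1^'n^'n) = A ** C - B ** C"
  by (simp add: matrix_matrix_mult_def vec_eq_iff sum_subtractf left_diff_distrib)

lemma matrix_diff_ldistrib: "(C::'a::ring_1^'n^'n) ** (A - B) = C ** A - C ** B"
  by (simp add: matrix_matrix_mult_def vec_eq_iff sum_subtractf right_diff_distrib)

lemma matrix_mult_scaleR_left: "(c *\<^sub>R A) ** B = c *\<^sub>R (A ** (B::complex^'n^'n))"
  by (simp add: scalar_matrix_assoc)

lemma matrix_mult_scaleR_right: "A ** (c *\<^sub>R B) = c *\<^sub>R (A ** (B::complex^'n^'n))"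
  by (simp add: matrix_scalar_ac scalar_matrix_assoc)

lemma matrix_sum_rdistrib:
  "finite I \<Longrightarrow> (\<Sum>i\<in>I. F i) ** (B::'a::comm_ring_1^'n^'n) = (\<Sum>i\<in>I. F i ** B)"
  by (induction I rule: finite_induct) (auto simp: matrix_add_rdistrib)

lemma matrix_sum_ldistrib:
  "finite I \<Longrightarrow> (B::'a::comm_ring_1^'n^'n) ** (\<Sum>i\<in>I. F i) = (\<Sum>i\<in>I. B ** F i)"
  by (induction I rule: finite_induct) (auto simp: matrix_add_ldistrib)

lemma matrix_vector_mult_sum:
  "finite I \<Longrightarrow> (\<Sum>i\<in>I. F i) *v (x::'a::comm_ring_1^'n) = (\<Sum>i\<in>I. F i *v x)"
  by (induction I rule: finite_induct) (auto simp: matrix_vector_mult_add_rdistrib)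

lemma matrix_vector_mult_scale: "M *v (c *s x) = c *s (M *v (x::complex^'n))"
  by (simp add: matrix_vector_mult_def vec_eq_iff sum_distrib_left mult_ac)

lemma idempotent_complement: "P ** P = P \<Longrightarrow> (mat 1 - P) ** (mat 1 - P) = mat 1 - (P::complex^'n^'n)"
  by (simp add: matrix_diff_rdistrib matrix_diff_ldistrib)

lemma trace_mult_herm_real:
  assumes "cadj X = X" "cadj R = R"
  shows "trace (X ** R) \<in> \<real>"
proof -
  have "cnj (trace (X ** R)) = trace (X ** R)"
    by (simp add: trace_cadj[symmetric] cadj_mult assms trace_mul_sym[of R X])
  then show ?thesis using Reals_cnj_iff by blast
qed

lemma trace_mult_herm_eq_Re:
  "cadj X = X \<Longrightarrow> cadj R = R \<Longrightarrow> trace (X ** R) = of_real (Re (trace (X ** R)))"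
  by (metis trace_mult_herm_real Re_complex_of_real Reals_cases)

definition cinner :: "complex^'n \<Rightarrow> complex^'n \<Rightarrow> complex" where
  "cinner x y = (\<Sum>i\<in>UNIV. cnj (x$i) * y$i)"

definition outer :: "complex^'n \<Rightarrow> complex^'n \<Rightarrow> complex^'n^'n" where
  "outer u v = (\<chi> a b. u$a * cnj (v$b))"

lemma cnj_cinner: "cnj (cinner x y) = cinner y x"
  by (simp add: cinner_def mult.commute)

lemma cinner_add_left: "cinner (x + y) z = cinner x z + cinner y z"
  by (simp add: cinner_def distrib_right sum.distrib)

lemma cinner_add_right: "cinner z (x + y) = cinner z x + cinner z y"
  by (simp add: cinner_def distrib_left sum.distrib)

lemma cinner_scale_left: "cinner (c *s x) y = cnj c * cinner x y"
  by (simp add: cinner_def sum_distrib_left mult_ac)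

lemma cinner_scale_right: "cinner x (c *s y) = c * cinner x y"
  by (simp add: cinner_def sum_distrib_left mult_ac)

lemma cinner_zero_right [simp]: "cinner y 0 = 0"
  by (simp add: cinner_def)

lemma cinner_self: "cinner x x = of_real (\<Sum>i\<in>UNIV. (cmod (x$i))\<^sup>2)"
proof -
  have "\<And>i. cnj (x$i) * x$i = of_real ((cmod (x$i))\<^sup>2)"
    by (simp add: complex_norm_square mult.commute del: of_real_power)
  then show ?thesis unfolding cinner_def of_real_sum by simp
qed

lemma cinner_self_eq_0: "cinner x x = 0 \<longleftrightarrow> x = 0"
proof
  assume "cinner x x = 0"
  then have "(\<Sum>i\<in>UNIV. (cmod (x$i))\<^sup>2) = 0" unfolding cinner_self of_real_eq_0_iff .
  then have "\<forall>i\<in>UNIV. (cmod (x$i))\<^sup>2 = 0"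
    by (subst sum_nonneg_eq_0_iff[symmetric]) auto
  then show "x = 0" by (simp add: vec_eq_iff)
qed (simp add: cinner_def)

lemma cinner_adjoint: "cinner x (M *v y) = cinner (cadj M *v x) y"
  unfolding cinner_def matrix_vector_mult_def cadj_def
  by (simp add: sum_distrib_left sum_distrib_right mult_ac) (rule sum.swap)

lemma cinner_herm: "cadj M = M \<Longrightarrow> cinner x (M *v y) = cinner (M *v x) y"
  by (metis cinner_adjoint)

lemma cinner_herm_real: "cadj M = M \<Longrightarrow> cinner x (M *v x) = of_real (Re (cinner x (M *v x)))"
  by (metis cnj_cinner cinner_herm Reals_cnj_iff Re_complex_of_real Reals_cases)

lemma cinner_range_kernel:
  "cadj Q = Q \<Longrightarrow> Q *v u = u \<Longrightarrow> Q *v v = 0 \<Longrightarrow> cinner u v = 0"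
  by (metis cinner_herm cinner_zero_right)

lemma cinner_axis: "cinner (H *v axis a 1) (B *v axis b 1) = (cadj H ** B)$a$b"
  by (simp add: cinner_def matrix_vector_mult_def axis_def cadj_def matrix_matrix_mult_def
      if_distrib[of "\<lambda>x. _ * x"] cong: if_cong)

lemma normalize_nonzero_vector:
  assumes "x \<noteq> (0::complex^'n)"
  obtains r :: real where "r > 0" "cinner (of_real r *s x) (of_real r *s x) = 1"
proof -
  define s where "s = (\<Sum>i\<in>UNIV. (cmod (x$i))\<^sup>2)"
  have "s \<noteq> 0" using assms cinner_self_eq_0[of x] cinner_self[of x] unfolding s_def by (metis of_real_0)
  then have s: "s > 0" by (simp add: s_def order_le_neq_trans sum_nonneg)
  have xx: "cinner x x = of_real s" unfolding s_def by (rule cinner_self)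
  have "cinner (of_real (1 / sqrt s) *s x) (of_real (1 / sqrt s) *s x)
      = of_real (1 / sqrt s) * of_real (1 / sqrt s) * of_real s"
    by (simp add: cinner_scale_left cinner_scale_right xx)
  also have "\<dots> = of_real (s / (sqrt s * sqrt s))" by (simp del: real_sqrt_mult_self)
  also have "\<dots> = 1" using s by simp
  finally show ?thesis using that[of "1 / sqrt s"] s by simp
qed

lemma cadj_outer [simp]: "cadj (outer u v) = outer v u"
  by (simp add: cadj_def outer_def vec_eq_iff)

lemma outer_zero_left [simp]: "outer 0 v = 0"
  by (simp add: outer_def vec_eq_iff)

lemma outer_zero_right [simp]: "outer u 0 = 0"
  by (simp add: outer_def vec_eq_iff)

lemma trace_outer: "trace (outer u v) = cinner v u"
  by (simp add: trace_def outer_def cinner_def mult.commute)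

lemma outer_mult_outer: "outer u v ** outer x y = outer (cinner v x *s u) y"
  by (simp add: outer_def cinner_def matrix_matrix_mult_def vec_eq_iff sum_distrib_left
      sum_distrib_right mult_ac)

lemma matrix_mult_outer: "M ** outer u v = outer (M *v u) v"
  by (simp add: outer_def matrix_vector_mult_def matrix_matrix_mult_def vec_eq_iff
      sum_distrib_right sum_distrib_left mult_ac)

lemma outer_mult_matrix: "outer u v ** M = outer u (cadj M *v v)"
  by (simp add: outer_def cadj_def matrix_vector_mult_def matrix_matrix_mult_def vec_eq_iff
      sum_distrib_left mult_ac)

lemma outer_matrix_vector_mult: "outer u v *v x = cinner v x *s u"
  by (simp add: outer_def cinner_def matrix_vector_mult_def vec_eq_iff sum_distrib_right
      sum_distrib_left mult_ac)

lemma trace_mult_outer: "trace (M ** outer u v) = cinner v (M *v u)"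
  by (simp add: matrix_mult_outer trace_outer)

lemma outer_scale_right: "outer x (c *s y) = outer (cnj c *s x) y"
  by (simp add: outer_def vec_eq_iff mult_ac)

section \<open>The Frobenius norm\<close>

lemma norm_matrix_square: "(norm (M::complex^'n^'n))\<^sup>2 = (\<Sum>i\<in>UNIV. \<Sum>j\<in>UNIV. (cmod (M$i$j))\<^sup>2)"
  unfolding norm_vec_def L2_set_def by (simp add: sum_nonneg)

lemma norm_matrix_square_transpose:
  "(norm (M::complex^'n^'n))\<^sup>2 = (\<Sum>j\<in>UNIV. \<Sum>i\<in>UNIV. (cmod (M$i$j))\<^sup>2)"
  unfolding norm_matrix_square by (rule sum.swap)

lemma trace_cadj_mult_self: "trace (cadj M ** M) = of_real ((norm (M::complex^'n^'n))\<^sup>2)"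
proof -
  have "trace (cadj M ** M) = (\<Sum>i\<in>UNIV. \<Sum>j\<in>UNIV. cnj (M$j$i) * M$j$i)"
    by (simp add: trace_def matrix_matrix_mult_def cadj_def)
  also have "\<dots> = (\<Sum>j\<in>UNIV. \<Sum>i\<in>UNIV. cnj (M$j$i) * M$j$i)"
    by (rule sum.swap)
  also have "\<dots> = (\<Sum>j\<in>UNIV. \<Sum>i\<in>UNIV. of_real ((cmod (M$j$i))\<^sup>2))"
    by (simp add: complex_norm_square mult.commute del: of_real_power)
  also have "\<dots> = of_real ((norm M)\<^sup>2)"
    by (simp add: norm_matrix_square del: of_real_power)
  finally show ?thesis .
qed

lemma norm_cadj: "norm (cadj (M::complex^'n^'n)) = norm M"
proof -
  have "(norm (cadj M))\<^sup>2 = (norm M)\<^sup>2"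
    unfolding norm_matrix_square[of "cadj M"] norm_matrix_square_transpose[of M]
    by (simp add: cadj_def)
  then show ?thesis by simp
qed

lemma sum_abs_mult_square_le:
  fixes f g :: "'a \<Rightarrow> real"
  shows "(\<Sum>i\<in>A. \<bar>f i\<bar> * \<bar>g i\<bar>)\<^sup>2 \<le> (\<Sum>i\<in>A. (f i)\<^sup>2) * (\<Sum>i\<in>A. (g i)\<^sup>2)"
proof -
  have "(\<Sum>i\<in>A. \<bar>f i\<bar> * \<bar>g i\<bar>)\<^sup>2 \<le> (L2_set f A * L2_set g A)\<^sup>2"
    using L2_set_mult_ineq by (intro power_mono) (auto simp: sum_nonneg)
  also have "\<dots> = (\<Sum>i\<in>A. (f i)\<^sup>2) * (\<Sum>i\<in>A. (g i)\<^sup>2)"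
    unfolding L2_set_def power_mult_distrib by (simp add: sum_nonneg)
  finally show ?thesis .
qed

lemma norm_matrix_mult_le: "norm ((X::complex^'n^'n) ** (Y::complex^'n^'n)) \<le> norm X * norm Y"
proof -
  have "(norm (X ** Y))\<^sup>2 = (\<Sum>i\<in>UNIV. \<Sum>j\<in>UNIV. (cmod (\<Sum>l\<in>UNIV. X$i$l * Y$l$j))\<^sup>2)"
    unfolding norm_matrix_square by (simp add: matrix_matrix_mult_def)
  also have "\<dots> \<le> (\<Sum>i\<in>UNIV. \<Sum>j\<in>UNIV. (\<Sum>l\<in>UNIV. (cmod (X$i$l))\<^sup>2) * (\<Sum>l\<in>UNIV. (cmod (Y$l$j))\<^sup>2))"
  proof (intro sum_mono)
    fix i j
    have "cmod (\<Sum>l\<in>UNIV. X$i$l * Y$l$j) \<le> (\<Sum>l\<in>UNIV. \<bar>cmod (X$i$l)\<bar> * \<bar>cmod (Y$l$j)\<bar>)"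
      by (rule order_trans[OF norm_sum]) (simp add: norm_mult)
    then have "(cmod (\<Sum>l\<in>UNIV. X$i$l * Y$l$j))\<^sup>2 \<le> (\<Sum>l\<in>UNIV. \<bar>cmod (X$i$l)\<bar> * \<bar>cmod (Y$l$j)\<bar>)\<^sup>2"
      by (intro power_mono) auto
    also have "\<dots> \<le> (\<Sum>l\<in>UNIV. (cmod (X$i$l))\<^sup>2) * (\<Sum>l\<in>UNIV. (cmod (Y$l$j))\<^sup>2)"
      by (rule sum_abs_mult_square_le)
    finally show "(cmod (\<Sum>l\<in>UNIV. X$i$l * Y$l$j))\<^sup>2
        \<le> (\<Sum>l\<in>UNIV. (cmod (X$i$l))\<^sup>2) * (\<Sum>l\<in>UNIV. (cmod (Y$l$j))\<^sup>2)" .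
  qed
  also have "\<dots> = (\<Sum>i\<in>UNIV. \<Sum>l\<in>UNIV. (cmod (X$i$l))\<^sup>2) * (\<Sum>j\<in>UNIV. \<Sum>l\<in>UNIV. (cmod (Y$l$j))\<^sup>2)"
    by (rule sum_product[symmetric])
  also have "\<dots> = (norm X * norm Y)\<^sup>2"
    using norm_matrix_square[of X] norm_matrix_square_transpose[of Y] by (simp add: power_mult_distrib)
  finally show ?thesis by (rule power2_le_imp_le) simp
qed

lemma sum_UNIV_pairs:
  "(\<Sum>i\<in>UNIV. \<Sum>j\<in>UNIV. f i j) = (\<Sum>p\<in>(UNIV::('a::finite \<times> 'b::finite) set). f (fst p) (snd p))"
  by (simp add: sum.cartesian_product split_beta UNIV_Times_UNIV[symmetric] del: UNIV_Times_UNIV)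

lemma norm_trace_mult_le: "cmod (trace ((X::complex^'n^'n) ** (Y::complex^'n^'n))) \<le> norm X * norm Y"
proof -
  let ?x = "\<lambda>p. cmod (X$fst p$snd p)" and ?y = "\<lambda>p. cmod (Y$snd p$fst p)"
  have "cmod (trace (X ** Y)) = cmod (\<Sum>p\<in>UNIV. X$fst p$snd p * Y$snd p$fst p)"
    unfolding trace_def matrix_matrix_mult_def by (simp add: sum_UNIV_pairs)
  also have "\<dots> \<le> (\<Sum>p\<in>UNIV. \<bar>?x p\<bar> * \<bar>?y p\<bar>)"
    by (rule order_trans[OF norm_sum]) (simp add: norm_mult)
  also have "\<dots> \<le> norm X * norm Y"
  proof (rule power2_le_imp_le)
    have "(\<Sum>p\<in>UNIV. \<bar>?x p\<bar> * \<bar>?y p\<bar>)\<^sup>2 \<le> (\<Sum>p\<in>UNIV. (?x p)\<^sup>2) * (\<Sum>p\<in>UNIV. (?y p)\<^sup>2)"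
      by (rule sum_abs_mult_square_le)
    also have "\<dots> = (norm X * norm Y)\<^sup>2"
      using norm_matrix_square[of X] norm_matrix_square_transpose[of Y]
      by (simp add: sum_UNIV_pairs power_mult_distrib)
    finally show "(\<Sum>p\<in>UNIV. \<bar>?x p\<bar> * \<bar>?y p\<bar>)\<^sup>2 \<le> (norm X * norm Y)\<^sup>2" .
  qed simp
  finally show ?thesis .
qed

lemma norm_trace_mult_gram_le: "cmod (trace (Z ** (cadj B ** B))) \<le> norm Z * (norm (B::complex^'n^'n))\<^sup>2"
proof -
  have "cmod (trace (Z ** (cadj B ** B))) \<le> norm Z * norm (cadj B ** B)"
    by (rule norm_trace_mult_le)
  also have "\<dots> \<le> norm Z * (norm (cadj B) * norm B)"
    by (intro mult_left_mono norm_matrix_mult_le) simp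
  finally show ?thesis by (simp add: norm_cadj power2_eq_square)
qed

section \<open>Rank-k projections and the k-numerical radius\<close>

lemma rank_projD:
  assumes "P \<in> rank_proj k"
  shows "cadj P = P" "P ** P = P" "trace P = of_nat k"
  using assms by (auto simp: rank_proj_def)

lemma rank_proj_herm: "P \<in> rank_proj k \<Longrightarrow> P \<in> herm"
  by (simp add: rank_proj_def herm_iff)

lemma rank_proj_complement:
  assumes "(P::complex^'n^'n) \<in> rank_proj k" "k \<le> CARD('n)"
  shows "mat 1 - P \<in> rank_proj (CARD('n) - k)"
  using assms by (auto simp: rank_proj_def idempotent_complement trace_sub trace_I)

lemma norm_rank_proj_square: "P \<in> rank_proj k \<Longrightarrow> (norm (P::complex^'n^'n))\<^sup>2 = real k"
proof -
  assume "P \<in> rank_proj k"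
  then have "complex_of_real ((norm P)\<^sup>2) = complex_of_real (real k)"
    using trace_cadj_mult_self[of P] by (simp add: rank_proj_def)
  then show ?thesis by (simp only: of_real_eq_iff)
qed

lemma norm_rank_proj_le: "P \<in> rank_proj k \<Longrightarrow> norm (P::complex^'n^'n) \<le> real k"
proof (rule power2_le_imp_le)
  assume "P \<in> rank_proj k"
  moreover have "real k \<le> (real k)\<^sup>2" by (cases k) (auto simp: power2_eq_square)
  ultimately show "(norm P)\<^sup>2 \<le> (real k)\<^sup>2" by (simp add: norm_rank_proj_square)
qed simp

lemma rank_proj_nonzero: "P \<in> rank_proj k \<Longrightarrow> 1 \<le> k \<Longrightarrow> P \<noteq> 0"
  by (auto simp: rank_proj_def trace_def)

lemma rank_proj_0: "P \<in> rank_proj 0 \<Longrightarrow> P = 0"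
  using norm_rank_proj_square[of P 0] by simp

lemma continuous_on_matrix_entry: "continuous_on S (\<lambda>P::complex^'n^'n. P$i$j)"
proof (rule linear_continuous_on)
  show "bounded_linear (\<lambda>P::complex^'n^'n. P$i$j)"
    using bounded_linear_compose[OF bounded_linear_vec_nth[of j] bounded_linear_vec_nth[of i]] by simp
qed

lemma continuous_on_matrix_mult_entry:
  "continuous_on S (\<lambda>P::complex^'n^'n. (f P ** g P :: complex^'m^'m) $ a $ b)"
  if "\<And>i j. continuous_on S (\<lambda>P. f P $ i $ j)" "\<And>i j. continuous_on S (\<lambda>P. g P $ i $ j)"
  unfolding matrix_matrix_mult_def by (simp, intro continuous_intros that)

lemma continuous_on_matrix_mult:
  "continuous_on S (\<lambda>P::complex^'n^'n. (f P ** g P :: complex^'m^'m))"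
  if "\<And>i j. continuous_on S (\<lambda>P. f P $ i $ j)" "\<And>i j. continuous_on S (\<lambda>P. g P $ i $ j)"
  unfolding matrix_matrix_mult_def by (intro continuous_on_vec_lambda continuous_intros that)

lemma continuous_on_trace:
  "continuous_on S (\<lambda>P::complex^'n^'n. trace (f P :: complex^'m^'m))"
  if "\<And>i j. continuous_on S (\<lambda>P. f P $ i $ j)"
  unfolding trace_def by (intro continuous_intros that)

lemma closed_rank_proj: "closed (rank_proj k :: (complex^'n^'n) set)"
proof -
  have "rank_proj k = {P::complex^'n^'n. cadj P = P} \<inter> {P. P ** P = P} \<inter> {P. trace P = of_nat k}"
    by (auto simp: rank_proj_def)
  moreover have "closed {P::complex^'n^'n. cadj P = P}"
    unfolding cadj_def
    by (intro closed_Collect_eq continuous_on_id continuous_on_vec_lambda continuous_on_cnj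
        continuous_on_matrix_entry)
  moreover have "closed {P::complex^'n^'n. P ** P = P}"
    by (intro closed_Collect_eq continuous_on_id continuous_on_matrix_mult continuous_on_matrix_entry)
  moreover have "closed {P::complex^'n^'n. trace P = of_nat k}"
    by (intro closed_Collect_eq continuous_on_const continuous_on_trace continuous_on_matrix_entry)
  ultimately show ?thesis by (simp add: closed_Int)
qed

lemma compact_rank_proj: "compact (rank_proj k :: (complex^'n^'n) set)"
proof -
  have "bounded (rank_proj k :: (complex^'n^'n) set)"
    using norm_rank_proj_le by (auto simp: bounded_iff)
  then show ?thesis using closed_rank_proj compact_eq_bounded_closed by blast
qed

lemma rank_proj_nonempty:
  assumes "k \<le> CARD('n)"
  shows "rank_proj k \<noteq> ({} :: (complex^'n^'n) set)"
proof -
  obtain S :: "'n set" where S: "card S = k"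
    using assms obtain_subset_with_card_n by blast
  define D :: "complex^'n^'n" where "D = (\<chi> i j. if i = j \<and> i \<in> S then 1 else 0)"
  have "D ** D = D"
  proof -
    have "\<And>i j. (\<Sum>l\<in>UNIV. (if i = l \<and> i \<in> S then 1 else 0) * (if l = j \<and> l \<in> S then 1 else (0::complex)))
        = (\<Sum>l\<in>UNIV. if l = i then (if i = j \<and> i \<in> S then 1 else 0) else 0)"
      by (rule sum.cong) auto
    then show ?thesis by (simp add: matrix_matrix_mult_def D_def vec_eq_iff)
  qed
  moreover have "cadj D = D" by (auto simp: cadj_def D_def vec_eq_iff)
  moreover have "trace D = of_nat k" using S by (simp add: trace_def D_def sum.If_cases)
  ultimately show ?thesis by (auto simp: rank_proj_def)
qed

context
  fixes k :: nat
  assumes k_le: "k \<le> CARD('n::finite)"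
begin

lemma wk_attained:
  obtains P where "P \<in> rank_proj k" "wk k X = cmod (trace ((X::complex^'n^'n) ** P))"
    "\<forall>R\<in>rank_proj k. cmod (trace (X ** R)) \<le> wk k X"
proof -
  have "continuous_on (rank_proj k) (\<lambda>P::complex^'n^'n. cmod (trace (X ** P)))"
    by (intro continuous_on_norm continuous_on_trace continuous_on_matrix_mult_entry
        continuous_on_const continuous_on_matrix_entry)
  then obtain P where P: "P \<in> rank_proj k"
    "\<forall>R\<in>rank_proj k. cmod (trace (X ** R)) \<le> cmod (trace (X ** P))"
    using continuous_attains_sup[OF compact_rank_proj rank_proj_nonempty[OF k_le]] by blast
  moreover have "wk k X = cmod (trace (X ** P))"
    unfolding wk_def by (rule cSup_eq_maximum) (use P in auto)
  ultimately show ?thesis using that by simp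
qed

lemma attain_set_nonempty: "attain_set k (X::complex^'n^'n) \<noteq> {}"
proof -
  obtain P where "P \<in> rank_proj k" "wk k X = cmod (trace (X ** P))"
    using wk_attained[of X] by blast
  then show ?thesis by (auto simp: attain_set_def)
qed

lemma wk_upper: "R \<in> rank_proj k \<Longrightarrow> cmod (trace ((X::complex^'n^'n) ** R)) \<le> wk k X"
  using wk_attained[of X] by blast

lemma wk_least:
  "(\<And>R. R \<in> rank_proj k \<Longrightarrow> cmod (trace ((X::complex^'n^'n) ** R)) \<le> c) \<Longrightarrow> wk k X \<le> c"
  unfolding wk_def using rank_proj_nonempty[OF k_le] by (intro cSup_least) auto

lemma attain_set_iff:
  "P \<in> attain_set k X \<longleftrightarrow>
     P \<in> rank_proj k \<and> (\<forall>R\<in>rank_proj k. cmod (trace ((X::complex^'n^'n) ** R)) \<le> cmod (trace (X ** P)))"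
  using wk_upper wk_least[of X "cmod (trace (X ** P))"] by (auto simp: attain_set_def intro: antisym)

end

section \<open>Parallel pairs share an attaining projection\<close>

lemma trace_add_scaleR_mult:
  "trace ((X + \<mu> *\<^sub>R Y) ** (R::complex^'n^'n)) = trace (X ** R) + \<mu> *\<^sub>R trace (Y ** R)"
  by (simp add: matrix_add_rdistrib matrix_mult_scaleR_left trace_add trace_scaleR)

context
  fixes k :: nat
  assumes k_le: "k \<le> CARD('n::finite)"
begin

lemma wk_parallel_common_attainer:
  assumes "wk_parallel k (X::complex^'n^'n) Y"
  obtains R where "R \<in> attain_set k X" "R \<in> attain_set k Y"
proof -
  obtain \<mu> :: real where \<mu>: "\<mu> \<in> {1,-1}" "wk k (X + \<mu> *\<^sub>R Y) = wk k X + wk k Y"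
    using assms unfolding wk_parallel_def by blast
  obtain R where "R \<in> attain_set k (X + \<mu> *\<^sub>R Y)"
    using attain_set_nonempty[OF k_le] by blast
  then have R: "R \<in> rank_proj k"
    and eq: "cmod (trace (X ** R) + \<mu> *\<^sub>R trace (Y ** R)) = wk k X + wk k Y"
    using \<mu> by (auto simp: attain_set_def trace_add_scaleR_mult)
  have "cmod (trace (X ** R) + \<mu> *\<^sub>R trace (Y ** R)) \<le> cmod (trace (X ** R)) + cmod (trace (Y ** R))"
    using norm_triangle_ineq[of "trace (X ** R)" "\<mu> *\<^sub>R trace (Y ** R)"] \<mu>(1) by auto
  moreover have "cmod (trace (X ** R)) \<le> wk k X" "cmod (trace (Y ** R)) \<le> wk k Y"
    using wk_upper[OF k_le R] by auto
  ultimately have "cmod (trace (X ** R)) = wk k X" "cmod (trace (Y ** R)) = wk k Y"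
    using eq by linarith+
  then show ?thesis using that R by (auto simp: attain_set_def)
qed

lemma wk_parallel_of_common_attainer:
  assumes X: "cadj X = X" and Y: "cadj Y = (Y::complex^'n^'n)"
    and RX: "R \<in> attain_set k X" and RY: "R \<in> attain_set k Y"
  shows "wk_parallel k X Y"
proof -
  have R: "R \<in> rank_proj k" using RX by (simp add: attain_set_def)
  define a where "a = Re (trace (X ** R))"
  define b where "b = Re (trace (Y ** R))"
  have a: "trace (X ** R) = of_real a" and b: "trace (Y ** R) = of_real b"
    unfolding a_def b_def using trace_mult_herm_eq_Re X Y rank_projD(1)[OF R] by blast+
  have wa: "\<bar>a\<bar> = wk k X" and wb: "\<bar>b\<bar> = wk k Y"
    using RX RY by (auto simp: attain_set_def a b)
  define \<mu> :: real where "\<mu> = (if a * b \<ge> 0 then 1 else -1)"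
  have \<mu>: "\<mu> \<in> {1, -1}" by (auto simp: \<mu>_def)
  have "\<bar>a + \<mu> * b\<bar> = \<bar>a\<bar> + \<bar>b\<bar>"
    unfolding \<mu>_def by (auto simp: abs_if zero_le_mult_iff mult_le_0_iff)
  moreover have "trace ((X + \<mu> *\<^sub>R Y) ** R) = of_real (a + \<mu> * b)"
    unfolding trace_add_scaleR_mult a b by (simp add: scaleR_conv_of_real)
  ultimately have "wk k X + wk k Y \<le> wk k (X + \<mu> *\<^sub>R Y)"
    using wk_upper[OF k_le R, of "X + \<mu> *\<^sub>R Y"] wa wb by (metis norm_of_real)
  moreover have "wk k (X + \<mu> *\<^sub>R Y) \<le> wk k X + wk k Y"
  proof (rule wk_least[OF k_le])
    fix S :: "complex^'n^'n" assume S: "S \<in> rank_proj k"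
    have "cmod (trace ((X + \<mu> *\<^sub>R Y) ** S)) \<le> cmod (trace (X ** S)) + cmod (\<mu> *\<^sub>R trace (Y ** S))"
      unfolding trace_add_scaleR_mult by (rule norm_triangle_ineq)
    also have "\<dots> \<le> wk k X + wk k Y" using wk_upper[OF k_le S] \<mu> by (auto intro: add_mono)
    finally show "cmod (trace ((X + \<mu> *\<^sub>R Y) ** S)) \<le> wk k X + wk k Y" .
  qed
  ultimately show ?thesis unfolding wk_parallel_def using \<mu> by (intro bexI[of _ \<mu>]) auto
qed

end

section \<open>An attaining projection commutes with the matrix\<close>

lemma small_rotation_gain:
  fixes a d b :: real
  assumes "b > 0"
  obtains t where "0 < t" "t \<le> 1/2" "a < (1 - t\<^sup>2) * a + 2 * sqrt (1 - t\<^sup>2) * t * b + t\<^sup>2 * d"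
proof -
  define t where "t = min (1/2) (b / (2 * (\<bar>a\<bar> + \<bar>d\<bar> + 1)))"
  have t0: "t > 0" using assms by (simp add: t_def)
  have t1: "t \<le> 1/2" unfolding t_def by (rule min.cobounded1)
  have "t * (\<bar>a\<bar> + \<bar>d\<bar>) \<le> b / (2 * (\<bar>a\<bar> + \<bar>d\<bar> + 1)) * (\<bar>a\<bar> + \<bar>d\<bar>)"
    by (rule mult_right_mono) (auto simp: t_def)
  also have "\<dots> < b" using assms by (simp add: field_simps) (smt (verit) abs_ge_zero mult_nonneg_nonneg)
  finally have small: "t * (a - d) < b" using t0 by (smt (verit) mult_left_mono abs_ge_self abs_minus_le_zero)
  have "(1/2)\<^sup>2 \<le> 1 - t\<^sup>2"
    using power_mono[OF t1, of 2] t0 by (simp add: power2_eq_square)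
  then have "1/2 \<le> sqrt (1 - t\<^sup>2)"
    using real_sqrt_le_mono[of "(1/2)\<^sup>2" "1 - t\<^sup>2"] by simp
  then have "t * (t * (a - d)) < t * (2 * sqrt (1 - t\<^sup>2) * b)"
    using small t0 assms by (intro mult_strict_left_mono) (auto intro: order.strict_trans2)
  then show ?thesis using that[OF t0 t1] by (simp add: algebra_simps power2_eq_square)
qed

lemma cinner_lincomb_quadratic:
  "cinner (c *s u + s *s v) (Z *v (c *s u + s *s v)) =
     cnj c * c * cinner u (Z *v u) + cnj c * s * cinner u (Z *v v)
       + cnj s * c * cinner v (Z *v u) + cnj s * s * cinner v (Z *v v)"
  by (simp add: matrix_vector_mult_scale cinner_add_left cinner_add_right cinner_scale_left cinner_scale_right algebra_simps)

lemma rank_proj_rotate: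
  fixes Q :: "complex^'n^'n" and u v w :: "complex^'n"
  assumes Q: "Q \<in> rank_proj k"
    and u: "Q *v u = u" "cinner u u = 1" and v: "Q *v v = 0" "cinner v v = 1"
    and cs: "c\<^sup>2 + (cmod s)\<^sup>2 = 1" and w: "w = of_real c *s u + s *s v"
  shows "Q - outer u u + outer w w \<in> rank_proj k"
proof -
  note Qh = rank_projD(1)[OF Q] and Qi = rank_projD(2)[OF Q] and Qt = rank_projD(3)[OF Q]
  have uv: "cinner u v = 0" using cinner_range_kernel[OF Qh u(1) v(1)] .
  have uw: "cinner u w = of_real c" using u uv by (simp add: w cinner_add_right cinner_scale_right)
  have wu: "cinner w u = of_real c" using uw cnj_cinner[of u w] by (metis complex_cnj_complex_of_real)
  have "cinner w w = of_real (c\<^sup>2) + cnj s * s"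
    using u v uv cnj_cinner[of u v]
    by (simp add: w cinner_add_right cinner_add_left cinner_scale_right cinner_scale_left
        algebra_simps power2_eq_square)
  also have "cnj s * s = of_real ((cmod s)\<^sup>2)" by (metis complex_norm_square mult.commute)
  finally have ww: "cinner w w = 1" using cs by (metis of_real_1 of_real_add)
  have Qw: "Q *v w = of_real c *s u"
    by (simp add: w matrix_vector_right_distrib matrix_vector_mult_scale u v)
  have "Q ** outer u u = outer u u" "outer u u ** Q = outer u u"
    "Q ** outer w w = outer (of_real c *s u) w" "outer w w ** Q = outer (of_real c *s w) u"
    by (simp_all add: matrix_mult_outer outer_mult_matrix outer_scale_right Qh Qw u)
  moreover have "outer u u ** outer u u = outer u u" "outer u u ** outer w w = outer (of_real c *s u) w"
    "outer w w ** outer u u = outer (of_real c *s w) u" "outer w w ** outer w w = outer w w"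
    by (simp_all add: outer_mult_outer u uw wu ww)
  ultimately show ?thesis
    unfolding rank_proj_def using Qh Qi Qt u ww
    by (simp add: matrix_add_rdistrib matrix_diff_rdistrib matrix_diff_ldistrib matrix_add_ldistrib
        trace_add trace_sub trace_outer)
qed

lemma max_Re_trace_range_kernel_orthogonal:
  fixes Z Q :: "complex^'n^'n" and u v :: "complex^'n"
  assumes Zh: "cadj Z = Z" and Q: "Q \<in> rank_proj k"
    and max: "\<forall>R\<in>rank_proj k. Re (trace (Z ** R)) \<le> Re (trace (Z ** Q))"
    and u: "Q *v u = u" "cinner u u = 1" and v: "Q *v v = 0" "cinner v v = 1"
  shows "cinner u (Z *v v) = 0"
proof (rule ccontr)
  define \<beta> where "\<beta> = cinner u (Z *v v)"
  define a where "a = Re (cinner u (Z *v u))"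
  define d where "d = Re (cinner v (Z *v v))"
  assume "cinner u (Z *v v) \<noteq> 0"
  then have \<beta>: "cmod \<beta> > 0" by (simp add: \<beta>_def)
  obtain t where t: "0 < t" "t \<le> 1/2"
    and gain: "a < (1 - t\<^sup>2) * a + 2 * sqrt (1 - t\<^sup>2) * t * cmod \<beta> + t\<^sup>2 * d"
    using small_rotation_gain[OF \<beta>] by blast
  define c where "c = sqrt (1 - t\<^sup>2)"
  have c: "c\<^sup>2 = 1 - t\<^sup>2" using t by (simp add: c_def power_le_one)
  \<comment> \<open>the phase of s makes the cross term s \<beta> real and positive\<close>
  define s where "s = of_real (t / cmod \<beta>) * cnj \<beta>"
  have s: "(cmod s)\<^sup>2 = t\<^sup>2" using \<beta> t by (simp add: s_def norm_mult norm_divide)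
  have "cnj \<beta> * \<beta> = of_real (cmod \<beta> * cmod \<beta>)"
    by (metis complex_norm_square mult.commute power2_eq_square)
  then have s\<beta>: "s * \<beta> = of_real (t * cmod \<beta>)"
    using \<beta> by (simp add: s_def mult.assoc del: of_real_mult) (simp flip: of_real_mult of_real_divide)
  \<comment> \<open>replacing u by w = c u + s v in the range of Q then increases Re tr(Z \<cdot>)\<close>
  define w where "w = of_real c *s u + s *s v"
  have R: "Q - outer u u + outer w w \<in> rank_proj k"
    by (rule rank_proj_rotate[OF Q u v _ w_def]) (simp add: c s)
  have "cinner w (Z *v w) = of_real (c\<^sup>2 * a + 2 * c * t * cmod \<beta> + (cmod s)\<^sup>2 * d)"
  proof -
    have "cinner v (Z *v u) = cnj \<beta>" unfolding \<beta>_def by (metis cnj_cinner cinner_herm[OF Zh])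
    then have "cinner w (Z *v w) = of_real c * of_real c * of_real a + of_real c * (s * \<beta>)
        + of_real c * cnj (s * \<beta>) + cnj s * s * of_real d"
      unfolding w_def cinner_lincomb_quadratic a_def d_def \<beta>_def
      by (simp add: cinner_herm_real[OF Zh, symmetric] mult_ac)
    also have "cnj s * s = of_real ((cmod s)\<^sup>2)" by (metis complex_norm_square mult.commute)
    finally show ?thesis unfolding s\<beta> by (simp add: power2_eq_square algebra_simps)
  qed
  then have "Re (trace (Z ** (Q - outer u u + outer w w)))
      = Re (trace (Z ** Q)) - a + (c\<^sup>2 * a + 2 * c * t * cmod \<beta> + t\<^sup>2 * d)"
    by (simp add: matrix_diff_ldistrib matrix_add_ldistrib trace_add trace_sub trace_mult_outer a_def s)
  with max R gain c show False unfolding c_def by fastforce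
qed

lemma max_Re_trace_commute:
  fixes Z Q :: "complex^'n^'n"
  assumes Zh: "cadj Z = Z" and Q: "Q \<in> rank_proj k"
    and max: "\<forall>R\<in>rank_proj k. Re (trace (Z ** R)) \<le> Re (trace (Z ** Q))"
  shows "Z ** Q = Q ** Z"
proof -
  note Qh = rank_projD(1)[OF Q] and Qi = rank_projD(2)[OF Q]
  have orth: "cinner x (Z *v y) = 0" if x: "Q *v x = x" and y: "Q *v y = 0" for x y
  proof (cases "x = 0 \<or> y = 0")
    case False
    then obtain r1 r2 :: real where r: "r1 > 0" "cinner (of_real r1 *s x) (of_real r1 *s x) = 1"
      "r2 > 0" "cinner (of_real r2 *s y) (of_real r2 *s y) = 1"
      using normalize_nonzero_vector by metis
    have "cinner (of_real r1 *s x) (Z *v (of_real r2 *s y)) = 0"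
      by (rule max_Re_trace_range_kernel_orthogonal[OF Zh Q max])
        (use r x y in \<open>auto simp: matrix_vector_mult_scale\<close>)
    then show ?thesis using r by (simp add: matrix_vector_mult_scale cinner_scale_left cinner_scale_right)
  qed (auto simp: cinner_def)
  have "(cadj Q ** (Z ** (mat 1 - Q)))$a$b = 0" for a b
    unfolding cinner_axis[symmetric] matrix_vector_mul_assoc[symmetric]
    by (rule orth) (simp_all add: matrix_vector_mul_assoc matrix_diff_ldistrib Qi)
  then have QZ: "Q ** Z = Q ** Z ** Q"
    using Qh by (simp add: vec_eq_iff matrix_diff_ldistrib matrix_mul_assoc)
  have "Z ** Q = cadj (Q ** Z ** Q)" by (metis QZ cadj_mult Zh Qh)
  also have "\<dots> = Q ** Z ** Q" by (simp add: cadj_mult Zh Qh matrix_mul_assoc)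
  finally show ?thesis using QZ by simp
qed

lemma attain_set_commute:
  fixes Z Q :: "complex^'n^'n"
  assumes k_le: "k \<le> CARD('n)" and Zh: "cadj Z = Z" and Q: "Q \<in> attain_set k Z"
  shows "Z ** Q = Q ** Z"
proof -
  have Qr: "Q \<in> rank_proj k" using Q by (simp add: attain_set_def)
  have max: "\<forall>R\<in>rank_proj k. cmod (trace (Z ** R)) \<le> cmod (trace (Z ** Q))"
    using Q attain_set_iff[OF k_le] by blast
  \<comment> \<open>|tr(ZQ)| is maximal, so Q maximises Re tr(\<sigma>ZR) for the sign \<sigma> of tr(ZQ)\<close>
  define \<sigma> :: real where "\<sigma> = (if Re (trace (Z ** Q)) \<ge> 0 then 1 else -1)"
  have "Re (trace ((\<sigma> *\<^sub>R Z) ** R)) \<le> Re (trace ((\<sigma> *\<^sub>R Z) ** Q))" if R: "R \<in> rank_proj k" for R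
  proof -
    have "\<sigma> * Re (trace (Z ** R)) \<le> cmod (trace (Z ** R))"
      using abs_Re_le_cmod[of "trace (Z ** R)"] by (auto simp: \<sigma>_def)
    also have "\<dots> \<le> cmod (trace (Z ** Q))" using max R by blast
    also have "\<dots> = \<bar>Re (trace (Z ** Q))\<bar>"
      by (metis trace_mult_herm_eq_Re[OF Zh rank_projD(1)[OF Qr]] norm_of_real)
    also have "\<dots> = \<sigma> * Re (trace (Z ** Q))" by (simp add: \<sigma>_def)
    finally show ?thesis by (simp add: matrix_mult_scaleR_left trace_scaleR)
  qed
  then have "(\<sigma> *\<^sub>R Z) ** Q = Q ** (\<sigma> *\<^sub>R Z)"
    by (intro max_Re_trace_commute[OF _ Qr]) (auto simp: Zh)
  then show ?thesis by (simp add: matrix_mult_scaleR_left matrix_mult_scaleR_right \<sigma>_def split: if_splits)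
qed

section \<open>Adding a large multiple of a commuting projection\<close>

lemma rank_proj_defect:
  fixes P R :: "complex^'n^'n"
  assumes P: "P \<in> rank_proj k" and R: "R \<in> rank_proj k"
  defines "\<delta> \<equiv> (norm ((mat 1 - R) ** P))\<^sup>2"
  shows "(norm (R ** (mat 1 - P)))\<^sup>2 = \<delta>" "trace (P ** R) = of_real (real k - \<delta>)" "\<delta> \<le> real k"
proof -
  note Ph = rank_projD(1)[OF P] and Pi = rank_projD(2)[OF P] and Pt = rank_projD(3)[OF P]
  note Rh = rank_projD(1)[OF R] and Ri = rank_projD(2)[OF R] and Rt = rank_projD(3)[OF R]
  have cyclic: "trace (P ** R ** P) = trace (P ** R)"
    by (metis Pi matrix_mul_assoc trace_mul_sym)
  have "of_real \<delta> = trace (P ** (mat 1 - R) ** P)"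
    unfolding \<delta>_def trace_cadj_mult_self[symmetric]
    by (simp add: cadj_mult Ph Rh matrix_mul_assoc[symmetric])
      (simp add: matrix_mul_assoc idempotent_complement[OF Ri])
  also have "\<dots> = of_nat k - trace (P ** R)"
    by (simp add: matrix_diff_rdistrib matrix_diff_ldistrib trace_sub Pi Pt cyclic)
  finally have \<delta>: "of_real \<delta> = of_nat k - trace (P ** R)" .
  then show "trace (P ** R) = of_real (real k - \<delta>)" by simp
  have "of_real ((norm (R ** (mat 1 - P)))\<^sup>2) = trace ((mat 1 - P) ** R ** (mat 1 - P))"
    unfolding trace_cadj_mult_self[symmetric]
    by (simp add: cadj_mult Ph Rh matrix_mul_assoc[symmetric]) (simp add: matrix_mul_assoc Ri)
  also have "\<dots> = trace ((mat 1 - P) ** (mat 1 - P) ** R)"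
    by (metis matrix_mul_assoc trace_mul_sym)
  also have "\<dots> = of_real \<delta>"
    by (simp add: \<delta> idempotent_complement[OF Pi] matrix_diff_rdistrib trace_sub Rt)
      (simp add: matrix_diff_ldistrib matrix_diff_rdistrib Pi trace_sub trace_0[unfolded mat_0])
  finally show "(norm (R ** (mat 1 - P)))\<^sup>2 = \<delta>" using of_real_eq_iff by blast
  have "trace (P ** R) = of_real ((norm (R ** P))\<^sup>2)"
    unfolding trace_cadj_mult_self[symmetric]
    by (simp add: cadj_mult Ph Rh matrix_mul_assoc[symmetric]) (simp add: matrix_mul_assoc Ri cyclic)
  then have "complex_of_real \<delta> = complex_of_real (real k - (norm (R ** P))\<^sup>2)"
    using \<delta> by simp
  then have "\<delta> = real k - (norm (R ** P))\<^sup>2" by (simp only: of_real_eq_iff)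
  then show "\<delta> \<le> real k" by simp
qed

lemma trace_commuting_defect:
  fixes Z P R :: "complex^'n^'n"
  assumes comm: "Z ** P = P ** Z" and Pi: "P ** P = P" and Ph: "cadj P = P"
    and Rh: "cadj R = R" and Ri: "R ** R = R"
  defines "B \<equiv> (mat 1 - R) ** P" and "C \<equiv> R ** (mat 1 - P)"
  shows "trace (Z ** P) - trace (Z ** R) = trace (Z ** (cadj B ** B)) - trace (Z ** (cadj C ** C))"
proof -
  have "cadj B ** B = P ** (mat 1 - R) ** P"
    unfolding B_def by (simp add: cadj_mult Ph Rh matrix_mul_assoc[symmetric])
      (simp add: matrix_mul_assoc idempotent_complement[OF Ri])
  also have "\<dots> = P - P ** R ** P" by (simp add: matrix_diff_rdistrib matrix_diff_ldistrib Pi)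
  finally have BB: "cadj B ** B = P - P ** R ** P" .
  have CC: "cadj C ** C = (mat 1 - P) ** R ** (mat 1 - P)"
    unfolding C_def by (simp add: cadj_mult Ph Rh matrix_mul_assoc[symmetric])
      (simp add: matrix_mul_assoc Ri)
  have PRP: "trace (Z ** (P ** R ** P)) = trace (Z ** P ** R)"
  proof -
    have "trace (Z ** (P ** R ** P)) = trace (P ** (Z ** P ** R))"
      by (metis matrix_mul_assoc trace_mul_sym)
    also have "\<dots> = trace (Z ** P ** R)"
      by (simp add: matrix_mul_assoc comm[symmetric]) (simp add: matrix_mul_assoc[symmetric] Pi)
    finally show ?thesis .
  qed
  have "Z ** (mat 1 - P) = (mat 1 - P) ** Z" by (simp add: matrix_diff_rdistrib matrix_diff_ldistrib comm)
  then have "trace (Z ** ((mat 1 - P) ** R ** (mat 1 - P))) = trace (Z ** ((mat 1 - P) ** (mat 1 - P)) ** R)"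
    by (metis matrix_mul_assoc trace_mul_sym)
  also have "\<dots> = trace (Z ** R) - trace (Z ** P ** R)"
    unfolding idempotent_complement[OF Pi] by (simp add: matrix_diff_rdistrib matrix_diff_ldistrib trace_sub)
  finally show ?thesis
    unfolding BB CC matrix_diff_ldistrib trace_sub PRP by simp
qed

lemma Re_trace_commuting_rank_proj_le:
  fixes Z P R :: "complex^'n^'n"
  assumes comm: "Z ** P = P ** Z" and P: "P \<in> rank_proj k" and R: "R \<in> rank_proj k"
  shows "Re (trace (Z ** R)) \<le> Re (trace (Z ** P)) + 2 * norm Z * (norm ((mat 1 - R) ** P))\<^sup>2"
proof -
  let ?B = "(mat 1 - R) ** P" and ?C = "R ** (mat 1 - P)"
  have "Re (trace (Z ** P)) - Re (trace (Z ** R))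
      = Re (trace (Z ** (cadj ?B ** ?B))) - Re (trace (Z ** (cadj ?C ** ?C)))"
    using arg_cong[OF trace_commuting_defect[OF comm rank_projD(2,1)[OF P] rank_projD(1,2)[OF R]], of Re]
    by simp
  then show ?thesis
    using norm_trace_mult_gram_le[of Z ?B] norm_trace_mult_gram_le[of Z ?C]
      abs_Re_le_cmod[of "trace (Z ** (cadj ?B ** ?B))"] abs_Re_le_cmod[of "trace (Z ** (cadj ?C ** ?C))"]
    unfolding rank_proj_defect(1)[OF P R] by linarith
qed

lemma attain_set_add_scaled_proj:
  fixes Z P :: "complex^'n^'n"
  assumes k_le: "k \<le> CARD('n)" and Zh: "cadj Z = Z" and comm: "Z ** P = P ** Z"
    and P: "P \<in> rank_proj k" and c: "c \<ge> 2 * norm Z"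
  shows "P \<in> attain_set k (Z + c *\<^sub>R P)"
  unfolding attain_set_iff[OF k_le]
proof (intro conjI ballI P)
  fix R :: "complex^'n^'n" assume R: "R \<in> rank_proj k"
  define \<delta> where "\<delta> = (norm ((mat 1 - R) ** P))\<^sup>2"
  note defect = rank_proj_defect[OF P R, folded \<delta>_def]
  define p where "p = Re (trace (Z ** P))"
  define r where "r = Re (trace (Z ** R))"
  have p: "trace (Z ** P) = of_real p" and r: "trace (Z ** R) = of_real r"
    unfolding p_def r_def using trace_mult_herm_eq_Re Zh rank_projD(1) P R by blast+
  \<comment> \<open>the defect \<delta> controls both how far tr(ZR) is from tr(ZP) and how much of cP is lost\<close>
  have "r \<le> p + 2 * norm Z * \<delta>"
    using Re_trace_commuting_rank_proj_le[OF comm P R] by (simp add: p_def r_def \<delta>_def)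
  moreover have "\<bar>p\<bar> \<le> norm Z * real k" "\<bar>r\<bar> \<le> norm Z * real k"
    using norm_trace_mult_le[of Z P] norm_trace_mult_le[of Z R] norm_rank_proj_le[OF P] norm_rank_proj_le[OF R]
    by (simp_all add: p r) (meson mult_left_mono norm_ge_zero order_trans)+
  moreover have "c * \<delta> \<ge> 2 * norm Z * \<delta>" "c * real k \<ge> 2 * norm Z * real k"
    using c by (auto intro!: mult_right_mono simp: \<delta>_def)
  moreover have "c * (real k - \<delta>) \<ge> 0"
    using c defect(3) norm_ge_zero[of Z] by (intro mult_nonneg_nonneg) linarith+
  ultimately have "\<bar>r + c * (real k - \<delta>)\<bar> \<le> \<bar>p + c * real k\<bar>"
    by (simp add: algebra_simps abs_le_iff)
  moreover have "trace ((Z + c *\<^sub>R P) ** P) = of_real (p + c * real k)"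
    by (simp add: matrix_add_rdistrib matrix_mult_scaleR_left trace_add trace_scaleR
        rank_projD(2,3)[OF P] p) (simp add: scaleR_conv_of_real)
  moreover have "trace ((Z + c *\<^sub>R P) ** R) = of_real (r + c * (real k - \<delta>))"
    by (simp add: matrix_add_rdistrib matrix_mult_scaleR_left trace_add trace_scaleR defect(2) r)
      (simp add: scaleR_conv_of_real)
  ultimately show "cmod (trace ((Z + c *\<^sub>R P) ** R)) \<le> cmod (trace ((Z + c *\<^sub>R P) ** P))"
    by (metis norm_of_real)
qed

section \<open>Projections are determined by their Hermitian commutants\<close>

definition herm_commutant :: "complex^'n^'n \<Rightarrow> (complex^'n^'n) set" where
  "herm_commutant P = {Z. cadj Z = Z \<and> Z ** P = P ** Z}"

lemma subspace_herm_commutant: "subspace (herm_commutant P)"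
  unfolding subspace_def herm_commutant_def
  by (auto simp: matrix_add_rdistrib matrix_add_ldistrib matrix_mult_scaleR_left matrix_mult_scaleR_right)

lemma herm_commutant_subset_herm: "herm_commutant P \<subseteq> herm"
  by (auto simp: herm_commutant_def herm_iff)

definition scaleC :: "complex \<Rightarrow> complex^'n^'n \<Rightarrow> complex^'n^'n" where
  "scaleC c M = (\<chi> a b. c * M$a$b)"

lemma cadj_scaleC: "cadj (scaleC c M) = scaleC (cnj c) (cadj M)"
  by (simp add: scaleC_def cadj_def vec_eq_iff)

lemma scaleC_matrix_mult_left: "scaleC c M ** N = scaleC c (M ** N)"
  by (simp add: scaleC_def matrix_matrix_mult_def vec_eq_iff sum_distrib_left mult_ac)

lemma scaleC_matrix_mult_right: "M ** scaleC c N = scaleC c (M ** N)"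
  by (simp add: scaleC_def matrix_matrix_mult_def vec_eq_iff sum_distrib_left mult_ac)

lemma scaleC_diff: "scaleC c (M - N) = scaleC c M - scaleC c N"
  by (simp add: scaleC_def vec_eq_iff algebra_simps)

lemma scaleC_scaleC: "scaleC c (scaleC d M) = scaleC (c * d) M"
  by (simp add: scaleC_def vec_eq_iff)

lemma scaleC_minus_one: "scaleC (-1) M = - M"
  by (simp add: scaleC_def vec_eq_iff)

lemma scaleC_0 [simp]: "scaleC 0 M = 0"
  by (simp add: scaleC_def vec_eq_iff)

lemma scaleC_1 [simp]: "scaleC 1 M = M"
  by (simp add: scaleC_def vec_eq_iff)

lemma trace_scaleC: "trace (scaleC c M) = c * trace M"
  by (simp add: scaleC_def trace_def sum_distrib_left)

definition matrix_unit :: "'n \<Rightarrow> 'n \<Rightarrow> complex^'n^'n" where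
  "matrix_unit i j = (\<chi> a b. if a = i \<and> b = j then 1 else 0)"

lemma matrix_unit_sandwich: "(A ** matrix_unit i j ** B) $ a $ b = A$a$i * B$j$b"
proof -
  have "(A ** matrix_unit i j) $ a $ l = (if l = j then A$a$i else 0)" for l
    by (simp add: matrix_matrix_mult_def matrix_unit_def if_distrib[of "\<lambda>x. _ * x"] cong: if_cong)
  then show ?thesis
    by (simp add: matrix_matrix_mult_def if_distrib[of "\<lambda>x. x * _"] cong: if_cong)
qed

text \<open>Every matrix in the corner Q M Q is a complex combination of two Hermitian ones commuting with Q.\<close>

lemma herm_commutant_subset_corner_commute:
  fixes P Q :: "complex^'n^'n"
  assumes Qh: "cadj Q = Q" and Qi: "Q ** Q = Q"
    and sub: "herm_commutant Q \<subseteq> herm_commutant P"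
  shows "(Q ** M ** Q) ** P = P ** (Q ** M ** Q)"
proof -
  define Z where "Z = Q ** M ** Q"
  have ZQ: "Z ** Q = Z" "Q ** Z = Z" unfolding Z_def
    by (simp_all add: matrix_mul_assoc[symmetric] Qi) (simp add: matrix_mul_assoc Qi)
  have ZaQ: "cadj Z ** Q = cadj Z" "Q ** cadj Z = cadj Z"
    using arg_cong[OF ZQ(1), of cadj] arg_cong[OF ZQ(2), of cadj] by (simp_all add: cadj_mult Qh)
  define H1 where "H1 = Z + cadj Z"
  define H2 where "H2 = scaleC \<i> (Z - cadj Z)"
  have "H1 \<in> herm_commutant Q"
    by (simp add: herm_commutant_def H1_def add.commute matrix_add_rdistrib matrix_add_ldistrib ZQ ZaQ)
  then have H1: "H1 ** P = P ** H1" using sub by (auto simp: herm_commutant_def)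
  have "cadj H2 = H2"
    by (simp add: H2_def cadj_scaleC scaleC_diff scaleC_scaleC) (simp add: scaleC_def vec_eq_iff)
  then have "H2 \<in> herm_commutant Q"
    by (simp add: herm_commutant_def H2_def scaleC_matrix_mult_left scaleC_matrix_mult_right
        matrix_diff_rdistrib matrix_diff_ldistrib ZQ ZaQ)
  then have H2: "H2 ** P = P ** H2" using sub by (auto simp: herm_commutant_def)
  have "(Z + Z) ** P = (H1 - scaleC \<i> H2) ** P"
    by (simp add: H1_def H2_def scaleC_scaleC scaleC_diff scaleC_minus_one)
  also have "\<dots> = P ** (H1 - scaleC \<i> H2)"
    by (simp add: matrix_diff_rdistrib matrix_diff_ldistrib scaleC_matrix_mult_left
        scaleC_matrix_mult_right H1 H2)
  also have "\<dots> = P ** (Z + Z)"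
    by (simp add: H1_def H2_def scaleC_scaleC scaleC_diff scaleC_minus_one)
  finally have "Z ** P + Z ** P = P ** Z + P ** Z"
    by (simp only: matrix_add_rdistrib matrix_add_ldistrib)
  then show ?thesis unfolding Z_def by (simp add: vec_eq_iff)
qed

lemma herm_commutant_subset_scalar:
  fixes P Q :: "complex^'n^'n"
  assumes Qh: "cadj Q = Q" and Qi: "Q ** Q = Q" and Q0: "Q \<noteq> 0" and Pi: "P ** P = P"
    and sub: "herm_commutant Q \<subseteq> herm_commutant P"
  obtains \<gamma> where "\<gamma> \<in> {0, 1}" "P ** Q = scaleC \<gamma> Q"
proof -
  note corner = herm_commutant_subset_corner_commute[OF Qh Qi sub]
  have PQ: "Q ** P = P ** Q" using corner[of "mat 1"] by (simp add: Qi)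
  define A where "A = P ** Q"
  \<comment> \<open>A Q M Q = Q M Q A for every M; testing with matrix units forces A to be a multiple of Q\<close>
  have A: "A ** M ** Q = Q ** M ** A" for M
    using corner[of M] by (simp add: A_def matrix_mul_assoc) (simp add: matrix_mul_assoc[symmetric] PQ)
  obtain j b where jb: "Q$j$b \<noteq> 0" using Q0 by (auto simp: vec_eq_iff)
  define \<gamma> where "\<gamma> = A$j$b / Q$j$b"
  have "A$a$i = \<gamma> * Q$a$i" for a i
  proof -
    have "A$a$i * Q$j$b = Q$a$i * A$j$b"
      using arg_cong[OF A[of "matrix_unit i j"], of "\<lambda>M. M$a$b"] by (simp add: matrix_unit_sandwich)
    then show ?thesis using jb by (simp add: \<gamma>_def field_simps)
  qed
  then have A\<gamma>: "A = scaleC \<gamma> Q" by (simp add: scaleC_def vec_eq_iff)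
  have "A ** A = P ** (Q ** P) ** Q" by (simp add: A_def matrix_mul_assoc)
  also have "\<dots> = (P ** P) ** (Q ** Q)" by (simp add: PQ matrix_mul_assoc)
  finally have "A ** A = A" by (simp add: Pi Qi A_def)
  then have "scaleC (\<gamma> * \<gamma>) Q = scaleC \<gamma> Q"
    unfolding A\<gamma> by (simp add: scaleC_matrix_mult_left scaleC_matrix_mult_right scaleC_scaleC Qi)
  then have "\<gamma> * \<gamma> * Q$j$b = \<gamma> * Q$j$b" by (auto simp: scaleC_def vec_eq_iff)
  then have "\<gamma> \<in> {0, 1}" using jb by auto
  with A\<gamma> show ?thesis using that by (simp add: A_def)
qed

lemma herm_commutant_subset_rank_proj:
  fixes P1 P2 :: "complex^'n^'n"
  assumes k: "1 \<le> k" "k < CARD('n)" and P1: "P1 \<in> rank_proj k" and P2: "P2 \<in> rank_proj k"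
    and sub: "herm_commutant P2 \<subseteq> herm_commutant P1"
  shows "P1 = P2 \<or> (P1 = mat 1 - P2 \<and> CARD('n) = 2 * k)"
proof -
  note P1i = rank_projD(2)[OF P1] and P1t = rank_projD(3)[OF P1]
  note P2h = rank_projD(1)[OF P2] and P2i = rank_projD(2)[OF P2] and P2t = rank_projD(3)[OF P2]
  define P2' where "P2' = mat 1 - P2"
  have P2': "P2' \<in> rank_proj (CARD('n) - k)" unfolding P2'_def using P2 k by (simp add: rank_proj_complement)
  have "herm_commutant P2' = herm_commutant P2"
    by (auto simp: P2'_def herm_commutant_def matrix_diff_rdistrib matrix_diff_ldistrib)
  then have sub': "herm_commutant P2' \<subseteq> herm_commutant P1" using sub by simp
  have k': "1 \<le> CARD('n) - k" using k by simp
  obtain \<gamma> \<mu> where \<gamma>: "\<gamma> \<in> {0, 1}" "P1 ** P2 = scaleC \<gamma> P2"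
    and \<mu>: "\<mu> \<in> {0, 1}" "P1 ** P2' = scaleC \<mu> P2'"
    using herm_commutant_subset_scalar[OF P2h P2i rank_proj_nonzero[OF P2 k(1)] P1i sub]
      herm_commutant_subset_scalar[OF rank_projD(1,2)[OF P2'] rank_proj_nonzero[OF P2' k'] P1i sub']
    by metis
  have P1_eq: "P1 = scaleC \<gamma> P2 + scaleC \<mu> P2'"
    using \<gamma>(2) \<mu>(2) by (metis P2'_def add.commute diff_add_cancel matrix_add_ldistrib matrix_mul_rid)
  have tr: "of_nat k = \<gamma> * of_nat k + \<mu> * of_nat (CARD('n) - k)"
    using arg_cong[OF P1_eq, of trace] rank_projD(3)[OF P2'] by (simp add: trace_add trace_scaleC P1t P2t)
  consider "\<gamma> = 0" "\<mu> = 0" | "\<gamma> = 0" "\<mu> = 1" | "\<gamma> = 1" "\<mu> = 0" | "\<gamma> = 1" "\<mu> = 1"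
    using \<gamma>(1) \<mu>(1) by blast
  then show ?thesis
  proof cases
    case 2
    then have "of_nat k = (of_nat (CARD('n) - k) :: complex)" using tr by simp
    then have "k = CARD('n) - k" using of_nat_eq_iff by blast
    moreover have "P1 = mat 1 - P2" using 2 P1_eq by (simp add: P2'_def)
    ultimately show ?thesis using k by (intro disjI2) auto
  qed (use tr k P1_eq k' in simp_all)
qed

section \<open>All Hermitian commutants of rank-k projections have the same dimension\<close>

definition orthonormal :: "nat \<Rightarrow> (nat \<Rightarrow> complex^'n) \<Rightarrow> bool" where
  "orthonormal m u \<longleftrightarrow> (\<forall>i<m. \<forall>j<m. cinner (u i) (u j) = (if i = j then 1 else 0))"

lemma orthonormal_sum_outer_fixes:
  assumes "orthonormal m u" "i < m"
  shows "(\<Sum>l<m. outer (u l) (u l)) *v u i = u i"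
proof -
  have "(\<Sum>l<m. outer (u l) (u l)) *v u i = (\<Sum>l<m. cinner (u l) (u i) *s u l)"
    by (simp add: matrix_vector_mult_sum outer_matrix_vector_mult)
  also have "\<dots> = (\<Sum>l<m. if l = i then u l else 0)"
    using assms by (intro sum.cong) (auto simp: orthonormal_def)
  finally show ?thesis using assms(2) by simp
qed

lemma rank_proj_split_unit_vector:
  fixes P :: "complex^'n^'n"
  assumes P: "P \<in> rank_proj (Suc m)"
  obtains u where "cinner u u = 1" "P *v u = u" "P - outer u u \<in> rank_proj m"
proof -
  note Ph = rank_projD(1)[OF P] and Pi = rank_projD(2)[OF P] and Pt = rank_projD(3)[OF P]
  obtain j where x0: "P *v axis j 1 \<noteq> 0"
    using rank_proj_nonzero[OF P]
    by (auto simp: vec_eq_iff matrix_vector_mult_def axis_def if_distrib[of "\<lambda>x. _ * x"] cong: if_cong)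
  obtain r :: real where r: "cinner (of_real r *s (P *v axis j 1)) (of_real r *s (P *v axis j 1)) = 1"
    using normalize_nonzero_vector[OF x0] by blast
  define u where "u = of_real r *s (P *v axis j 1)"
  have uu: "cinner u u = 1" using r by (simp add: u_def)
  have Pu: "P *v u = u" by (simp add: u_def matrix_vector_mult_scale matrix_vector_mul_assoc Pi)
  have "(P - outer u u) ** (P - outer u u) = P - outer u u"
    by (simp add: matrix_diff_rdistrib matrix_diff_ldistrib Pi matrix_mult_outer outer_mult_matrix Ph Pu
        outer_mult_outer uu matrix_vector_mult_diff_rdistrib outer_matrix_vector_mult)
  moreover have "trace (P - outer u u) = of_nat m" by (simp add: trace_sub trace_outer uu Pt)
  ultimately show ?thesis using that uu Pu Ph by (simp add: rank_proj_def)
qed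

lemma rank_proj_orthonormal_decomposition:
  "P \<in> rank_proj m \<Longrightarrow> \<exists>u. orthonormal m u \<and> P = (\<Sum>i<m. outer (u i) (u i :: complex^'n))"
proof (induction m arbitrary: P)
  case 0
  then show ?case using rank_proj_0 by (auto simp: orthonormal_def)
next
  case (Suc m)
  obtain u where uu: "cinner u u = 1" and Pu: "P *v u = u" and P': "P - outer u u \<in> rank_proj m"
    using rank_proj_split_unit_vector[OF Suc.prems] by blast
  obtain w where w: "orthonormal m w" "P - outer u u = (\<Sum>i<m. outer (w i) (w i))"
    using Suc.IH[OF P'] by blast
  have uw: "cinner u (w i) = 0" "cinner (w i) u = 0" if "i < m" for i
  proof -
    have "(P - outer u u) *v u = 0" by (simp add: matrix_vector_mult_diff_rdistrib Pu outer_matrix_vector_mult uu)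
    moreover have "(P - outer u u) *v w i = w i" using orthonormal_sum_outer_fixes[OF w(1) that] w(2) by simp
    ultimately show "cinner u (w i) = 0"
      by (metis cinner_herm rank_projD(1)[OF P'] cinner_zero_right cnj_cinner complex_cnj_zero)
    then show "cinner (w i) u = 0" by (metis cnj_cinner complex_cnj_zero)
  qed
  have "orthonormal (Suc m) (w(m := u))"
    using w(1) uu uw by (auto simp: orthonormal_def less_Suc_eq)
  moreover have "P = (\<Sum>i<Suc m. outer ((w(m := u)) i) ((w(m := u)) i))"
    using w(2) by (simp add: algebra_simps)
  ultimately show ?case by blast
qed

lemma sum_outer_mult_sum_outer_orthonormal:
  assumes "orthonormal m u"
  shows "(\<Sum>i<m. outer (a i) (u i)) ** (\<Sum>j<m. outer (u j) (b j)) = (\<Sum>i<m. outer (a i) (b i :: complex^'n))"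
proof -
  have "(\<Sum>i<m. outer (a i) (u i)) ** (\<Sum>j<m. outer (u j) (b j))
      = (\<Sum>i<m. \<Sum>j<m. outer (cinner (u i) (u j) *s a i) (b j))"
    by (simp add: matrix_sum_rdistrib matrix_sum_ldistrib outer_mult_outer) (rule sum.swap)
  also have "\<dots> = (\<Sum>i<m. \<Sum>j<m. if j = i then outer (a i) (b j) else 0)"
    using assms by (intro sum.cong refl) (auto simp: orthonormal_def)
  finally show ?thesis by simp
qed

lemma sum_outer_mult_sum_outer_orthogonal:
  assumes "\<forall>i<(m::nat). \<forall>j<(m'::nat). cinner (u i) (v j) = 0"
  shows "(\<Sum>i<m. outer (a i) (u i)) ** (\<Sum>j<m'. outer (v j) (b j)) = (0::complex^'n^'n)"
proof -
  have "(\<Sum>i<m. outer (a i) (u i)) ** (\<Sum>j<m'. outer (v j) (b j))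
      = (\<Sum>i<m. \<Sum>j<m'. outer (cinner (u i) (v j) *s a i) (b j))"
    by (simp add: matrix_sum_rdistrib matrix_sum_ldistrib outer_mult_outer) (rule sum.swap)
  also have "\<dots> = 0" using assms by (intro sum.neutral ballI) (auto simp: outer_def vec_eq_iff)
  finally show ?thesis .
qed

lemma rank_proj_decomposition:
  assumes P: "(P::complex^'n^'n) \<in> rank_proj k" and k_le: "k \<le> CARD('n)"
  obtains p s where "orthonormal k p" "P = (\<Sum>i<k. outer (p i) (p i))"
    "orthonormal (CARD('n) - k) s" "mat 1 - P = (\<Sum>j<CARD('n) - k. outer (s j) (s j))"
    "\<forall>i<k. P *v p i = p i" "\<forall>j<CARD('n) - k. P *v s j = 0"
    "\<forall>i<k. \<forall>j<CARD('n) - k. cinner (p i) (s j) = 0"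
proof -
  obtain p where p: "orthonormal k p" "P = (\<Sum>i<k. outer (p i) (p i))"
    using rank_proj_orthonormal_decomposition[OF P] by blast
  obtain s where s: "orthonormal (CARD('n) - k) s" "mat 1 - P = (\<Sum>j<CARD('n) - k. outer (s j) (s j))"
    using rank_proj_orthonormal_decomposition[OF rank_proj_complement[OF P k_le]] by blast
  have Pp: "\<forall>i<k. P *v p i = p i" using orthonormal_sum_outer_fixes[OF p(1)] p(2) by simp
  have Ps: "\<forall>j<CARD('n) - k. P *v s j = 0"
  proof (intro allI impI)
    fix j assume j: "j < CARD('n) - k"
    have "(mat 1 - P) *v s j = s j" using orthonormal_sum_outer_fixes[OF s(1) j] s(2) by simp
    then show "P *v s j = 0" by (simp add: matrix_vector_mult_diff_rdistrib)
  qed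
  have "\<forall>i<k. \<forall>j<CARD('n) - k. cinner (p i) (s j) = 0"
    using cinner_range_kernel[OF rank_projD(1)[OF P]] Pp Ps by blast
  then show ?thesis using that p s Pp Ps by blast
qed

lemma rank_proj_unitary_intertwiner:
  fixes P Q :: "complex^'n^'n"
  assumes P: "P \<in> rank_proj k" and Q: "Q \<in> rank_proj k" and k_le: "k \<le> CARD('n)"
  obtains W where "cadj W ** W = mat 1" "P ** W = W ** Q"
proof -
  define n' where "n' = CARD('n) - k"
  obtain p s where p: "orthonormal k p" "P = (\<Sum>i<k. outer (p i) (p i))"
    "orthonormal n' s" "mat 1 - P = (\<Sum>j<n'. outer (s j) (s j))"
    "\<forall>i<k. P *v p i = p i" "\<forall>j<n'. P *v s j = 0" "\<forall>i<k. \<forall>j<n'. cinner (p i) (s j) = 0"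
    by (rule rank_proj_decomposition[OF P k_le, folded n'_def])
  obtain q r where q: "orthonormal k q" "Q = (\<Sum>i<k. outer (q i) (q i))"
    "orthonormal n' r" "mat 1 - Q = (\<Sum>j<n'. outer (r j) (r j))"
    "\<forall>i<k. Q *v q i = q i" "\<forall>j<n'. Q *v r j = 0"
    by (rule rank_proj_decomposition[OF Q k_le, folded n'_def])
  \<comment> \<open>W maps the orthonormal bases of ran Q and ker Q onto those of ran P and ker P\<close>
  define W where "W = (\<Sum>i<k. outer (p i) (q i)) + (\<Sum>j<n'. outer (s j) (r j))"
  have sp: "\<forall>j<n'. \<forall>i<k. cinner (s j) (p i) = 0" using p(7) cnj_cinner by (metis complex_cnj_zero)
  have "cadj W ** W = (\<Sum>i<k. outer (q i) (q i)) + (\<Sum>j<n'. outer (r j) (r j))"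
    by (simp add: W_def cadj_sum matrix_add_rdistrib matrix_add_ldistrib
        sum_outer_mult_sum_outer_orthonormal[OF p(1)] sum_outer_mult_sum_outer_orthonormal[OF p(3)]
        sum_outer_mult_sum_outer_orthogonal[OF p(7)] sum_outer_mult_sum_outer_orthogonal[OF sp])
  also have "\<dots> = mat 1" using q(2) q(4) by (metis add.commute diff_add_cancel)
  finally have "cadj W ** W = mat 1" .
  moreover have "P ** W = (\<Sum>i<k. outer (p i) (q i))"
    using p(5,6) by (simp add: W_def matrix_add_ldistrib matrix_sum_ldistrib matrix_mult_outer)
  moreover have "W ** Q = (\<Sum>i<k. outer (p i) (q i))"
    using q(5,6) rank_projD(1)[OF Q]
    by (simp add: W_def matrix_add_rdistrib matrix_sum_rdistrib outer_mult_matrix)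
  ultimately show ?thesis using that by simp
qed

lemma dim_herm_commutant_le:
  fixes P Q :: "complex^'n^'n"
  assumes P: "P \<in> rank_proj k" and Q: "Q \<in> rank_proj k" and k_le: "k \<le> CARD('n)"
  shows "dim (herm_commutant Q) \<le> dim (herm_commutant P)"
proof -
  obtain W where WW: "cadj W ** W = mat 1" and PW: "P ** W = W ** Q"
    using rank_proj_unitary_intertwiner[OF P Q k_le] by blast
  have WP: "cadj W ** P = Q ** cadj W"
    using arg_cong[OF PW, of cadj] by (simp add: cadj_mult rank_projD(1)[OF P] rank_projD(1)[OF Q])
  define \<phi> where "\<phi> Y = W ** Y ** cadj W" for Y
  have lin: "linear \<phi>"
    by (rule linearI) (simp_all add: \<phi>_def matrix_add_rdistrib matrix_add_ldistrib
        matrix_mult_scaleR_left matrix_mult_scaleR_right)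
  have inj: "inj_on \<phi> (span (herm_commutant Q))"
  proof (rule inj_onI)
    fix X Y assume "\<phi> X = \<phi> Y"
    then have "cadj W ** \<phi> X ** W = cadj W ** \<phi> Y ** W" by simp
    then show "X = Y" by (simp add: \<phi>_def matrix_mul_assoc WW) (simp add: matrix_mul_assoc[symmetric] WW)
  qed
  have "\<phi> ` herm_commutant Q \<subseteq> herm_commutant P"
  proof
    fix Z assume "Z \<in> \<phi> ` herm_commutant Q"
    then obtain Y where Y: "cadj Y = Y" "Y ** Q = Q ** Y" "Z = \<phi> Y" by (auto simp: herm_commutant_def)
    have "Z ** P = W ** Y ** (cadj W ** P)" by (simp add: Y \<phi>_def matrix_mul_assoc)
    also have "\<dots> = W ** (Y ** Q) ** cadj W" by (simp add: WP matrix_mul_assoc)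
    also have "\<dots> = (W ** Q) ** Y ** cadj W" by (simp add: Y(2) matrix_mul_assoc)
    also have "\<dots> = P ** Z" by (simp add: PW[symmetric] Y \<phi>_def matrix_mul_assoc)
    moreover have "cadj Z = Z" by (simp add: Y \<phi>_def cadj_mult matrix_mul_assoc)
    ultimately show "Z \<in> herm_commutant P" by (simp add: herm_commutant_def)
  qed
  then have "dim (\<phi> ` herm_commutant Q) \<le> dim (herm_commutant P)" by (rule dim_subset)
  then show ?thesis using eucl.dim_image_eq[OF lin inj] by simp
qed

section \<open>Parallel-preserving maps and Hermitian commutants\<close>

lemma herm_linear_extension:
  fixes T :: "complex^'n^'n \<Rightarrow> complex^'n^'n"
  assumes add: "\<forall>X\<in>herm. \<forall>Y\<in>herm. T (X + Y) = T X + T Y"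
    and hom: "\<forall>X\<in>herm. \<forall>c::real. T (c *\<^sub>R X) = c *\<^sub>R T X"
  obtains L where "linear L" "\<forall>X\<in>herm. L X = T X"
proof
  \<comment> \<open>extend through the Hermitian part (M + M*)/2, a real-linear projection onto herm\<close>
  define H where "H M = (1/2::real) *\<^sub>R (M + cadj M)" for M :: "complex^'n^'n"
  have H: "H M \<in> herm" for M by (simp add: H_def herm_iff add.commute)
  show "linear (\<lambda>M. T (H M))"
  proof (rule linearI)
    fix M N :: "complex^'n^'n" and r :: real
    have "H (M + N) = H M + H N" "H (r *\<^sub>R M) = r *\<^sub>R H M" by (simp_all add: H_def algebra_simps)
    then show "T (H (M + N)) = T (H M) + T (H N)" "T (H (r *\<^sub>R M)) = r *\<^sub>R T (H M)"
      using add hom H by simp_all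
  qed
  show "\<forall>X\<in>herm. T (H X) = T X"
    by (simp add: H_def herm_iff scaleR_add_right[symmetric])
qed

lemma mem_subspace_of_linear_image_dim_le:
  fixes f :: "'a::euclidean_space \<Rightarrow> 'b::euclidean_space"
  assumes f: "linear f" "inj_on f V" and V: "subspace V" "S \<subseteq> V" "Y \<in> V"
    and S: "subspace S" and U: "subspace U" "f ` insert Y S \<subseteq> U" "dim U \<le> dim S"
  shows "Y \<in> S"
proof (rule ccontr)
  assume "Y \<notin> S"
  then have "Y \<notin> span S" using S by (metis span_eq_iff)
  then have "dim (insert Y S) = dim S + 1" by (simp add: eucl.dim_insert)
  moreover have "span (insert Y S) \<subseteq> V"
    using V by (simp add: span_minimal)
  then have "dim (f ` span (insert Y S)) = dim (insert Y S)"
    using eucl.dim_image_eq[OF f(1), of "span (insert Y S)"] f(2) by (simp add: span_span inj_on_subset)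
  moreover have "f ` span (insert Y S) = span (f ` insert Y S)"
    by (rule span_linear_image[OF f(1), symmetric])
  then have "f ` span (insert Y S) \<subseteq> U" using span_minimal[OF U(2,1)] by simp
  then have "dim (f ` span (insert Y S)) \<le> dim U" by (rule dim_subset)
  ultimately show False using U(3) by simp
qed

lemma parallel_preserver_herm_commutant_image:
  fixes T :: "complex^'n^'n \<Rightarrow> complex^'n^'n"
  assumes k_le: "k \<le> CARD('n)"
    and add: "\<forall>X\<in>herm. \<forall>Y\<in>herm. T (X + Y) = T X + T Y"
    and hom: "\<forall>X\<in>herm. \<forall>c::real. T (c *\<^sub>R X) = c *\<^sub>R T X"
    and herm: "T ` herm \<subseteq> herm"
    and par: "\<forall>X\<in>herm. \<forall>Y\<in>herm. wk_parallel k X Y \<longrightarrow> wk_parallel k (T X) (T Y)"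
    and Q: "attain_set k (T X) = {Q}" and X: "X \<in> herm" and P: "P \<in> attain_set k X"
  shows "T ` herm_commutant P \<subseteq> herm_commutant Q"
proof -
  \<comment> \<open>T Y is parallel to T X, whose only attaining projection is Q\<close>
  have shared: "T Y ** Q = Q ** T Y" if Y: "Y \<in> herm" "P \<in> attain_set k Y" for Y
  proof -
    have "wk_parallel k X Y"
      using wk_parallel_of_common_attainer[OF k_le _ _ P Y(2)] X Y(1) by (simp add: herm_iff)
    then have "wk_parallel k (T X) (T Y)" using par X Y(1) by blast
    then have "Q \<in> attain_set k (T Y)"
      using wk_parallel_common_attainer[OF k_le] Q by (metis singletonD)
    moreover have "T Y \<in> herm" using herm Y(1) by blast
    ultimately show ?thesis using attain_set_commute[OF k_le] by (simp add: herm_iff)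
  qed
  have Pr: "P \<in> rank_proj k" using P by (simp add: attain_set_def)
  then have Ph: "P \<in> herm" by (rule rank_proj_herm)
  show ?thesis
  proof
    fix W assume "W \<in> T ` herm_commutant P"
    then obtain Z where Z: "Z \<in> herm_commutant P" and W: "W = T Z" by blast
    have Zh: "Z \<in> herm" and Zc: "Z ** P = P ** Z" using Z by (auto simp: herm_commutant_def herm_iff)
    define c where "c = 2 * norm Z"
    have "Z + c *\<^sub>R P \<in> herm" using Zh Ph by (simp add: herm_iff)
    moreover have "P \<in> attain_set k (Z + c *\<^sub>R P)"
      using attain_set_add_scaled_proj[OF k_le _ Zc Pr] Zh by (simp add: herm_iff c_def)
    ultimately have "T (Z + c *\<^sub>R P) ** Q = Q ** T (Z + c *\<^sub>R P)" by (rule shared)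
    moreover have "T P ** Q = Q ** T P"
      using shared[OF Ph] attain_set_add_scaled_proj[OF k_le _ _ Pr, of 0 1] by simp
    moreover have "T (Z + c *\<^sub>R P) = T Z + c *\<^sub>R T P"
      using add hom Zh Ph subspace_herm by (metis subspace_scale)
    ultimately have "T Z ** Q = Q ** T Z"
      by (simp add: matrix_add_rdistrib matrix_add_ldistrib matrix_mult_scaleR_left matrix_mult_scaleR_right)
    moreover have "T Z \<in> herm" using herm Zh by blast
    ultimately show "W \<in> herm_commutant Q" using W by (simp add: herm_commutant_def herm_iff)
  qed
qed

lemma rank_proj_eq_or_complement_of_commutant_images:
  fixes L :: "complex^'n^'n \<Rightarrow> complex^'n^'n"
  assumes k: "1 \<le> k" "k < CARD('n)" and L: "linear L" "inj_on L herm"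
    and Q: "Q \<in> rank_proj k" and P1: "P1 \<in> rank_proj k" and P2: "P2 \<in> rank_proj k"
    and image: "L ` herm_commutant P1 \<subseteq> herm_commutant Q" "L ` herm_commutant P2 \<subseteq> herm_commutant Q"
  shows "P1 = P2 \<or> (P1 = mat 1 - P2 \<and> CARD('n) = 2 * k)"
proof (rule herm_commutant_subset_rank_proj[OF k P1 P2])
  show "herm_commutant P2 \<subseteq> herm_commutant P1"
  proof
    fix Y assume Y: "Y \<in> herm_commutant P2"
    have "Y \<in> herm" using Y herm_commutant_subset_herm by blast
    moreover have "L Y \<in> herm_commutant Q" using image(2) Y by blast
    then have "L ` insert Y (herm_commutant P1) \<subseteq> herm_commutant Q" using image(1) by simp
    ultimately show "Y \<in> herm_commutant P1"
      using k(2) by (intro mem_subspace_of_linear_image_dim_le[OF L subspace_herm herm_commutant_subset_herm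
            _ subspace_herm_commutant subspace_herm_commutant _ dim_herm_commutant_le[OF P1 Q]]) simp_all
  qed
qed

lemma singleton_or_complement_pair:
  fixes S :: "(complex^'n^'n) set"
  assumes "S \<noteq> {}" and pair: "\<And>P1 P2. P1 \<in> S \<Longrightarrow> P2 \<in> S \<Longrightarrow> P1 = P2 \<or> (P1 = mat 1 - P2 \<and> c)"
  shows "(\<exists>P. S = {P}) \<or> (c \<and> (\<exists>P. S = {P, mat 1 - P}))"
proof -
  obtain P where P: "P \<in> S" using assms(1) by blast
  show ?thesis
  proof (cases "S = {P}")
    case False
    then obtain P' where P': "P' \<in> S" "P' \<noteq> P" using P by blast
    then have "P' = mat 1 - P" "c" using pair[OF P'(1) P] by auto
    moreover have "S = {P, mat 1 - P}" using pair[OF _ P] P P' calculation(1) by blast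
    ultimately show ?thesis by blast
  qed blast
qed

theorem mainTheorem14:
  fixes k :: nat and T :: "complex^'n^'n \<Rightarrow> complex^'n^'n" and A :: "complex^'n^'n"
  assumes "1 \<le> k" and "k < CARD('n)"
    and add: "\<forall>X\<in>herm. \<forall>Y\<in>herm. T (X + Y) = T X + T Y"
    and hom: "\<forall>X\<in>herm. \<forall>c::real. T (c *\<^sub>R X) = c *\<^sub>R T X"
    and bij: "bij_betw T herm herm"
    and par: "\<forall>X\<in>herm. \<forall>Y\<in>herm. wk_parallel k X Y \<longrightarrow> wk_parallel k (T X) (T Y)"
    and "A \<in> herm"
    and "\<exists>Q. attain_set k A = {Q}"
  shows "\<forall>X\<in>herm. T X = A \<longrightarrow>
           ((\<exists>P. attain_set k X = {P}) \<or>
            (CARD('n) = 2 * k \<and> (\<exists>P. attain_set k X = {P, mat 1 - P})))"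
proof (intro ballI impI)
  fix X assume X: "X \<in> herm" "T X = A"
  have k_le: "k \<le> CARD('n)" using \<open>k < CARD('n)\<close> by simp
  obtain Q where Q: "attain_set k (T X) = {Q}" using \<open>\<exists>Q. _\<close> X(2) by blast
  have Qr: "Q \<in> rank_proj k" using Q by (auto simp: attain_set_def)
  obtain L where L: "linear L" "\<forall>X\<in>herm. L X = T X" using herm_linear_extension[OF add hom] by blast
  have inj: "inj_on L herm" using bij L(2) by (simp add: bij_betw_def inj_on_def)
  have image: "L ` herm_commutant P \<subseteq> herm_commutant Q" if "P \<in> attain_set k X" for P
    using parallel_preserver_herm_commutant_image[OF k_le add hom _ par Q X(1) that] bij L(2)
      herm_commutant_subset_herm by (force simp: bij_betw_def)
  show "(\<exists>P. attain_set k X = {P}) \<or> (CARD('n) = 2 * k \<and> (\<exists>P. attain_set k X = {P, mat 1 - P}))"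
  proof (rule singleton_or_complement_pair[OF attain_set_nonempty[OF k_le]])
    fix P1 P2 assume "P1 \<in> attain_set k X" "P2 \<in> attain_set k X"
    then show "P1 = P2 \<or> (P1 = mat 1 - P2 \<and> CARD('n) = 2 * k)"
      using rank_proj_eq_or_complement_of_commutant_images[OF \<open>1 \<le> k\<close> \<open>k < CARD('n)\<close> L(1) inj Qr]
        image by (simp add: attain_set_def)
  qed
qed

end
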